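(* Let $n<0<m$ be integers. There is no family $(\Phi_j)_{n\leq j\leq m}$ of orientation preserving homeomorphisms of the circle $S^1$ such that: each $\Phi_j$ with $j<0$ commutes with each $\Phi_{j'}$ with $j'>0$; $\Phi_j$ has a fixed point if and only if $j\neq 0$; and $\Phi_1\circ\cdots\circ\Phi_m=\Phi_0=\Phi_{-1}\circ\Phi_{-2}\circ\cdots\circ\Phi_{n}$. *)

theory Defs
  imports "HOL-Analysis.Analysis"
begin

definition circle :: "complex set" where
  "circle = sphere 0 1"

definition orient_pres_homeo :: "(complex \<Rightarrow> complex) \<Rightarrow> bool" where
  "orient_pres_homeo f \<longleftrightarrow>
     (\<exists>g. homeomorphism circle circle f g) \<and>
     (\<exists>F :: real \<Rightarrow> real. continuous_on UNIV F \<and> strict_mono F \<and>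
        (\<forall>t. f (cis (2 * pi * t)) = cis (2 * pi * F t)))"

text \<open>Composition of a list of maps: compose [f1,...,fk] = f1 \<circ> ... \<circ> fk.\<close>
definition compose :: "('a \<Rightarrow> 'a) list \<Rightarrow> 'a \<Rightarrow> 'a" where
  "compose fs = foldr (\<circ>) fs id"

end

theory Submission
  imports Defs
begin

(*
  Lift every map to the real line through t \<mapsto> cis (2 pi t).  For j > 0 the
  maps \<Phi> j have fixed points but no common one (a common fixed point would be fixed by
  \<Phi> 0 = \<Phi> 1 \<circ> ... \<circ> \<Phi> m).  For i < 0 the lifted fixed point set of \<Phi> i is closed, 1-periodic,
  nonempty and, by commutativity, invariant under the lifts of all \<Phi> j with j > 0.

  The key fact on the line: if two such invariant sets K and C were disjoint, the lifts would
  have a common fixed point.  Indeed, take the last point a of K before some point of C; the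
  orbit of a under the lifts stays in K and every orbit point is followed by a gap that reaches
  C, so the orbit is uniformly discrete.  Each lift maps the (finite) part of the orbit between
  two consecutive fixed points x, x + 1 of itself into itself, hence fixes it, in particular a.

  Consequently the fixed point sets of the \<Phi> i (i < 0) intersect, so the \<Phi> i have a common
  fixed point, which is then fixed by \<Phi> 0 = \<Phi> -1 \<circ> ... \<circ> \<Phi> n: a contradiction.
*)

section \<open>The covering map of the circle\<close>

lemma cis_eq_imp_int_diff:
  assumes "cis (2 * pi * a) = cis (2 * pi * b)"
  shows "\<exists>k::int. a = b + of_int k"
proof -
  have "exp (\<i> * complex_of_real (2 * pi * a)) = exp (\<i> * complex_of_real (2 * pi * b))"
    using assms by (simp add: cis_conv_exp)
  then obtain k where k: "\<i> * complex_of_real (2 * pi * a)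
      = \<i> * complex_of_real (2 * pi * b) + complex_of_real (real_of_int (2 * k) * pi) * \<i>"
    using exp_eq by blast
  have "2 * pi * a = 2 * pi * (b + of_int k)"
    using arg_cong[OF k, of Im] by (simp add: algebra_simps)
  then have "a = b + of_int k" by simp
  then show ?thesis by blast
qed

lemma cis_shift_int: "cis (2 * pi * (a + of_int k)) = cis (2 * pi * a)"
proof -
  have "cis (2 * pi * (a + of_int k)) = cis (2 * pi * a) * cis (2 * pi * of_int k)"
    by (subst cis_mult) (simp add: distrib_left)
  also have "cis (2 * pi * of_int k) = 1" by (rule cis_multiple_2pi) simp
  finally show ?thesis by simp
qed

lemma cis_in_circle: "cis t \<in> circle"
  by (simp add: circle_def)

lemma circle_covered: "z \<in> circle \<Longrightarrow> \<exists>t. z = cis (2 * pi * t)"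
proof -
  assume "z \<in> circle"
  then have "z \<noteq> 0" "sgn z = z" by (auto simp: circle_def sgn_div_norm)
  then have "z = cis (2 * pi * (Arg z / (2 * pi)))" using Arg_correct by simp
  then show ?thesis by blast
qed

section \<open>Lifts to the real line\<close>

definition lift_of :: "(complex \<Rightarrow> complex) \<Rightarrow> (real \<Rightarrow> real) \<Rightarrow> bool" where
  "lift_of f P \<longleftrightarrow> (\<forall>t. f (cis (2 * pi * t)) = cis (2 * pi * P t))"

text \<open>An increasing homeomorphism of the line commuting with the unit translation, i.e.\ a
  lift of an orientation preserving circle homeomorphism.\<close>
definition degree_one :: "(real \<Rightarrow> real) \<Rightarrow> bool" where
  "degree_one P \<longleftrightarrow> strict_mono P \<and> surj P \<and> (\<forall>t. P (t + 1) = P t + 1)"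

lemma shift_int:
  fixes P :: "real \<Rightarrow> real"
  assumes per: "\<And>t. P (t + 1) = P t + 1"
  shows "P (t + of_int k) = P t + of_int k"
proof (induction k rule: int_induct[where k = 0])
  case (step1 i)
  have "P (t + of_int (i + 1)) = P ((t + of_int i) + 1)" by (simp add: add.assoc)
  then show ?case using step1 per by simp
next
  case (step2 i)
  have "P (t + of_int i) = P (t + of_int (i - 1)) + 1" using per[of "t + of_int (i - 1)"] by simp
  then show ?case using step2 by simp
qed simp

lemma periodic_continuous_surj:
  fixes P :: "real \<Rightarrow> real"
  assumes per: "\<And>t. P (t + 1) = P t + 1" and cont: "continuous_on UNIV P"
  shows "surj P"
proof -
  have "y \<in> range P" for y
  proof -
    define N where "N = ceiling \<bar>y - P 0\<bar>"
    have "P (- of_int N) = P 0 - of_int N" "P (of_int N) = P 0 + of_int N"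
      using shift_int[of P, OF per, of 0 "- N"] shift_int[of P, OF per, of 0 N] by simp_all
    moreover have "\<bar>y - P 0\<bar> \<le> of_int N" unfolding N_def by linarith
    ultimately have "P (- of_int N) \<le> y" "y \<le> P (of_int N)" "- of_int N \<le> (of_int N :: real)"
      by auto
    then obtain x where "P x = y"
      using IVT'[of P "- of_int N" y "of_int N"] cont by (meson continuous_on_subset subset_UNIV)
    then show ?thesis by blast
  qed
  then show ?thesis by blast
qed

text \<open>A monotone lift of a circle homeomorphism has degree one: F (t + 1) - F t is a positive
  integer, and if it were at least 2, some u in [t, t + 1] would satisfy F u = F t + 1,
  contradicting injectivity of f on the circle.\<close>
lemma homeomorphism_lift_period:
  assumes hom: "homeomorphism circle circle f g" and lift: "lift_of f F"
    and cont: "continuous_on UNIV F" and mono: "strict_mono F"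
  shows "F (t + 1) = F t + 1"
proof -
  have inj: "x = y" if "x \<in> circle" "y \<in> circle" "f x = f y" for x y
    using hom that unfolding homeomorphism_def by metis
  have "cis (2 * pi * F (t + 1)) = cis (2 * pi * F t)"
    using lift cis_shift_int[of t 1] unfolding lift_of_def by (metis of_int_1)
  then obtain k :: int where k: "F (t + 1) = F t + of_int k" using cis_eq_imp_int_diff by blast
  have "F t < F (t + 1)" using mono by (simp add: strict_mono_def)
  then have k1: "k \<ge> 1" using k by simp
  show ?thesis
  proof (rule ccontr)
    assume "F (t + 1) \<noteq> F t + 1"
    then have "F t + 1 \<le> F (t + 1)" using k k1 by simp
    then obtain u where u: "t \<le> u" "u \<le> t + 1" "F u = F t + 1"
      using IVT'[of F t "F t + 1" "t + 1"] cont by (meson continuous_on_subset subset_UNIV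
          le_add_same_cancel1 zero_le_one)
    have "f (cis (2 * pi * u)) = f (cis (2 * pi * t))"
      using lift cis_shift_int[of "F t" 1] u(3) unfolding lift_of_def by simp
    then have "cis (2 * pi * u) = cis (2 * pi * t)" using inj cis_in_circle by blast
    then obtain j :: int where j: "u = t + of_int j" using cis_eq_imp_int_diff by blast
    then have "j = 0 \<or> j = 1" using u(1,2) by auto
    then show False using j u(3) k \<open>F (t + 1) \<noteq> F t + 1\<close> \<open>F t < F (t + 1)\<close> by auto
  qed
qed

text \<open>An orientation preserving homeomorphism with a fixed point has a degree one lift with a
  fixed point (shift a lift by the integer by which it moves a preimage of the fixed point).\<close>
lemma orient_pres_homeo_fixed_lift:
  assumes f: "orient_pres_homeo f" and z: "z \<in> circle" "f z = z"
  shows "\<exists>P. lift_of f P \<and> degree_one P \<and> (\<exists>x. P x = x)"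
proof -
  obtain g where hom: "homeomorphism circle circle f g"
    using f unfolding orient_pres_homeo_def by blast
  obtain F :: "real \<Rightarrow> real" where cont: "continuous_on UNIV F" and mono: "strict_mono F"
    and lift: "lift_of f F"
    using f unfolding orient_pres_homeo_def lift_of_def by blast
  obtain x where x: "z = cis (2 * pi * x)" using circle_covered z(1) by blast
  have "cis (2 * pi * F x) = cis (2 * pi * x)" using lift z(2) x unfolding lift_of_def by metis
  then obtain c :: int where c: "F x = x + of_int c" using cis_eq_imp_int_diff by blast
  define P where "P = (\<lambda>s. F s - of_int c)"
  have "lift_of f P"
    using lift cis_shift_int[of "F _ - of_int c" c] unfolding lift_of_def P_def by simp
  moreover have "P (t + 1) = P t + 1" for t
    using homeomorphism_lift_period[OF hom lift cont mono] by (simp add: P_def)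
  moreover have "continuous_on UNIV P" unfolding P_def by (intro continuous_intros cont)
  moreover have "strict_mono P" using mono by (simp add: strict_mono_def P_def)
  moreover have "P x = x" using c by (simp add: P_def)
  ultimately show ?thesis using periodic_continuous_surj unfolding degree_one_def by blast
qed

section \<open>Invariant periodic sets of degree one maps\<close>

definition invariant_periodic :: "'j set \<Rightarrow> ('j \<Rightarrow> real \<Rightarrow> real) \<Rightarrow> real set \<Rightarrow> bool" where
  "invariant_periodic J P X \<longleftrightarrow> closed X \<and> X \<noteq> {} \<and> (\<forall>t k. t \<in> X \<longrightarrow> t + of_int k \<in> X) \<and>
     (\<forall>j\<in>J. \<forall>t. P j t \<in> X \<longleftrightarrow> t \<in> X)"

inductive_set orbit :: "('j \<Rightarrow> real \<Rightarrow> real) \<Rightarrow> 'j set \<Rightarrow> real \<Rightarrow> real set"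
  for P J a where
  base: "a \<in> orbit P J a"
| step: "u \<in> orbit P J a \<Longrightarrow> j \<in> J \<Longrightarrow> P j u \<in> orbit P J a"

lemma strict_mono_finite_self_map_id:
  fixes f :: "real \<Rightarrow> real"
  assumes "finite S" "f ` S \<subseteq> S" "strict_mono f" "s \<in> S"
  shows "f s = s"
proof (rule ccontr)
  define M where "M = {s\<in>S. f s \<noteq> s}"
  assume "f s \<noteq> s"
  then have M: "M \<noteq> {}" "finite M" using assms(1,4) by (auto simp: M_def)
  define s0 where "s0 = Min M"
  have s0: "s0 \<in> S" "f s0 \<noteq> s0" using Min_in[OF M(2,1)] by (auto simp: s0_def M_def)
  have below: "f t = t" if "t \<in> S" "t < s0" for t
    using that Min_le[OF M(2)] by (force simp: s0_def M_def)
  have inj: "inj_on f S" using assms(3) by (rule strict_mono_imp_inj_on)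
  have fS: "f ` S = S" by (rule endo_inj_surj[OF assms(1,2) inj])
  consider "f s0 < s0" | "s0 < f s0" using s0(2) by linarith
  then show False
  proof cases
    case 1
    then have "f (f s0) = f s0" using below assms(2) s0(1) by blast
    then show False using inj s0 assms(2) by (meson image_subset_iff inj_onD)
  next
    case 2
    obtain t where t: "t \<in> S" "s0 = f t" using fS s0(1) by blast
    have "\<not> t < s0" using below t s0(2) by fastforce
    moreover have "\<not> s0 < t" using assms(3) t(2) 2 by (metis order.asym strict_monoD)
    ultimately show False using t s0(2) by simp
  qed
qed

lemma separated_finite:
  fixes S :: "real set" and d :: real
  assumes "d > 0" "bounded S"
    and sep: "\<And>u v. u \<in> S \<Longrightarrow> v \<in> S \<Longrightarrow> u < v \<Longrightarrow> u + d \<le> v"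
  shows "finite S"
proof -
  have "uniform_discrete S"
    unfolding uniform_discrete_def
  proof (intro exI[of _ d] conjI ballI impI)
    fix u v assume "u \<in> S" "v \<in> S" "dist u v < d"
    then show "u = v" using sep[of u v] sep[of v u]
      by (cases u v rule: linorder_cases) (auto simp: dist_real_def)
  qed (rule assms(1))
  with assms(2) show ?thesis using uniform_discrete_finite_iff by blast
qed

text \<open>Disjoint closed 1-periodic sets have positive distance (reduce to the compact part of
  one of them in [0, 1]).\<close>
lemma periodic_disjoint_distance:
  fixes K C :: "real set"
  assumes "closed K" "closed C" "K \<inter> C = {}"
    and perK: "\<And>t k. t \<in> K \<Longrightarrow> t + of_int k \<in> K" and perC: "\<And>t k. t \<in> C \<Longrightarrow> t + of_int k \<in> C"
  shows "\<exists>d>0. \<forall>c\<in>C. \<forall>u\<in>K. d \<le> \<bar>c - u\<bar>"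
proof -
  have "compact (C \<inter> {0..1})" using assms(2) by (simp add: closed_Int_compact)
  moreover have "(C \<inter> {0..1}) \<inter> K = {}" using assms(3) by blast
  ultimately obtain d where d: "d > 0" "\<forall>x\<in>C \<inter> {0..1}. \<forall>y\<in>K. d \<le> dist x y"
    using separate_compact_closed assms(1) by metis
  have "d \<le> \<bar>c - u\<bar>" if "c \<in> C" "u \<in> K" for c u
  proof -
    have "c + of_int (- floor c) \<in> C" using perC[OF that(1)] by blast
    moreover have "c + of_int (- floor c) \<in> {0..1}" by simp linarith
    ultimately have "c + of_int (- floor c) \<in> C \<inter> {0..1}" by blast
    moreover have "u + of_int (- floor c) \<in> K" using perK[OF that(2)] by blast
    ultimately have "d \<le> dist (c + of_int (- floor c)) (u + of_int (- floor c))"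
      using d(2) by blast
    then show ?thesis by (simp add: dist_real_def)
  qed
  then show ?thesis using d(1) by blast
qed

lemma periodic_last_point_before:
  fixes K :: "real set"
  assumes "closed K" "K \<noteq> {}" "y \<notin> K" and perK: "\<And>t k. t \<in> K \<Longrightarrow> t + of_int k \<in> K"
  shows "\<exists>a\<in>K. a < y \<and> (\<forall>s. a < s \<and> s < y \<longrightarrow> s \<notin> K)"
proof -
  obtain k0 where "k0 \<in> K" using assms(2) by blast
  then have "k0 + of_int (- ceiling (k0 - y)) \<in> K" using perK by blast
  moreover have "k0 + of_int (- ceiling (k0 - y)) \<le> y" by simp linarith
  ultimately have ne: "K \<inter> {..y} \<noteq> {}" by blast
  have bdd: "bdd_above (K \<inter> {..y})" by (rule bdd_aboveI[of _ y]) auto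
  define a where "a = Sup (K \<inter> {..y})"
  have "a \<in> K \<inter> {..y}" unfolding a_def
    by (rule closed_contains_Sup[OF ne bdd]) (simp add: assms(1) closed_Int)
  moreover have "s \<notin> K" if "a < s" "s < y" for s
    using that cSup_upper[OF _ bdd, of s] by (force simp: a_def)
  ultimately show ?thesis using assms(3) by (metis IntD1 IntD2 atMost_iff order_less_le)
qed

text \<open>If a \<in> K is followed by a gap of K ending in a point of C, the same holds for every point
  of the orbit of a: the maps are increasing bijections preserving K and C.\<close>
lemma orbit_gap_invariant:
  assumes maps: "\<And>j. j \<in> J \<Longrightarrow> degree_one (P j)"
    and K: "invariant_periodic J P K" and C: "invariant_periodic J P C"
    and a: "a \<in> K" "c0 \<in> C" "a < c0" "\<forall>s. a < s \<and> s < c0 \<longrightarrow> s \<notin> K"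
    and u: "u \<in> orbit P J a"
  shows "u \<in> K \<and> (\<exists>c\<in>C. u < c \<and> (\<forall>s. u < s \<and> s < c \<longrightarrow> s \<notin> K))"
  using u
proof (induction rule: orbit.induct)
  case base
  then show ?case using a by blast
next
  case (step u j)
  then obtain c where c: "c \<in> C" "u < c" "\<forall>s. u < s \<and> s < c \<longrightarrow> s \<notin> K" by blast
  have mono: "strict_mono (P j)" and onto: "surj (P j)"
    using maps step(2) by (auto simp: degree_one_def)
  have KP: "P j t \<in> K \<longleftrightarrow> t \<in> K" and CP: "P j t \<in> C \<longleftrightarrow> t \<in> C" for t
    using K C step(2) by (auto simp: invariant_periodic_def)
  have "s \<notin> K" if s: "P j u < s" "s < P j c" for s
  proof -
    obtain t where t: "s = P j t" using onto by (metis surjD)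
    then have "u < t" "t < c" using s mono by (simp_all add: strict_mono_less)
    then show ?thesis using c(3) KP t by blast
  qed
  moreover have "P j u < P j c" using mono c(2) by (simp add: strict_monoD)
  ultimately show ?case using KP CP step(3) c(1) by blast
qed

text \<open>A degree one map with a fixed point fixes every point of an invariant set that meets
  each unit interval in a finite set: it maps the part between two consecutive fixed points
  x and x + 1 into itself, hence is the identity there.\<close>
lemma degree_one_fixes_invariant_locally_finite:
  assumes P: "degree_one P" and "\<exists>x. P x = x"
    and inv: "\<And>u. u \<in> Y \<Longrightarrow> P u \<in> Y" and fin: "\<And>x. finite (Y \<inter> {x..x + 1})" and "a \<in> Y"
  shows "P a = a"
proof -
  have mono: "strict_mono P" and per: "\<And>t. P (t + 1) = P t + 1"
    using P by (auto simp: degree_one_def)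
  obtain x0 where "P x0 = x0" using assms(2) by blast
  define x where "x = x0 + of_int (floor (a - x0))"
  have px: "P x = x" "P (x + 1) = x + 1"
    unfolding x_def using shift_int[of P, OF per] per \<open>P x0 = x0\<close> by simp_all
  define S where "S = Y \<inter> {x..x + 1}"
  have "P ` S \<subseteq> S"
  proof
    fix v assume "v \<in> P ` S"
    then obtain u where u: "u \<in> Y" "x \<le> u" "u \<le> x + 1" "v = P u" by (auto simp: S_def)
    then have "P x \<le> P u" "P u \<le> P (x + 1)" using mono by (simp_all add: strict_mono_less_eq)
    then show "v \<in> S" using u px inv[OF u(1)] by (simp add: S_def)
  qed
  moreover have "a \<in> S" using \<open>a \<in> Y\<close> unfolding S_def x_def by simp linarith
  ultimately show ?thesis using strict_mono_finite_self_map_id fin[of x] mono unfolding S_def by blast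
qed

lemma common_fixed_point_of_disjoint_invariant:
  assumes maps: "\<And>j. j \<in> J \<Longrightarrow> degree_one (P j)" and fixpts: "\<And>j. j \<in> J \<Longrightarrow> \<exists>x. P j x = x"
    and K: "invariant_periodic J P K" and C: "invariant_periodic J P C" and disj: "K \<inter> C = {}"
  shows "\<exists>a. \<forall>j\<in>J. P j a = a"
proof -
  have K': "closed K" "K \<noteq> {}" "\<And>t k. t \<in> K \<Longrightarrow> t + of_int k \<in> K"
    and C': "closed C" "C \<noteq> {}" "\<And>t k. t \<in> C \<Longrightarrow> t + of_int k \<in> C"
    using K C unfolding invariant_periodic_def by auto
  obtain d where d: "d > 0" "\<forall>c\<in>C. \<forall>u\<in>K. d \<le> \<bar>c - u\<bar>"
    using periodic_disjoint_distance[OF K'(1) C'(1) disj K'(3) C'(3)] by blast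
  obtain y where y: "y \<in> C" using C'(2) by blast
  then have "y \<notin> K" using disj by blast
  then obtain a where a: "a \<in> K" "a < y" "\<forall>s. a < s \<and> s < y \<longrightarrow> s \<notin> K"
    using periodic_last_point_before[OF K'(1,2) _ K'(3)] by blast
  have gap: "u \<in> K \<and> (\<exists>c\<in>C. u < c \<and> (\<forall>s. u < s \<and> s < c \<longrightarrow> s \<notin> K))"
    if "u \<in> orbit P J a" for u
    by (rule orbit_gap_invariant[OF _ K C a(1) y a(2,3) that]) (rule maps)
  have sep: "u + d \<le> v" if u: "u \<in> orbit P J a" and v: "v \<in> orbit P J a" and "u < v" for u v
  proof -
    obtain c where c: "c \<in> C" "u < c" "\<forall>s. u < s \<and> s < c \<longrightarrow> s \<notin> K"
      using gap[OF u] by blast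
    have "u + d \<le> c" using d(2) c(1,2) gap[OF u] by force
    then show ?thesis using c(3) gap[OF v] \<open>u < v\<close> by force
  qed
  have fin: "finite (orbit P J a \<inter> {x..x + 1})" for x
  proof (rule separated_finite[OF d(1)])
    show "bounded (orbit P J a \<inter> {x..x + 1})" by (simp add: bounded_Int)
  qed (auto intro!: sep)
  have "P j a = a" if j: "j \<in> J" for j
    by (rule degree_one_fixes_invariant_locally_finite[OF maps[OF j] fixpts[OF j]
          orbit.step[OF _ j] fin orbit.base])
  then show ?thesis by blast
qed

lemma invariant_periodic_Int:
  "invariant_periodic J P X \<Longrightarrow> invariant_periodic J P Y \<Longrightarrow> X \<inter> Y \<noteq> {} \<Longrightarrow>
    invariant_periodic J P (X \<inter> Y)"
  by (auto simp: invariant_periodic_def)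

lemma invariant_periodic_Inter:
  assumes maps: "\<And>j. j \<in> J \<Longrightarrow> degree_one (P j)" and fixpts: "\<And>j. j \<in> J \<Longrightarrow> \<exists>x. P j x = x"
    and no_common: "\<not> (\<exists>a. \<forall>j\<in>J. P j a = a)"
    and "finite I" "I \<noteq> {}" and X: "\<And>i. i \<in> I \<Longrightarrow> invariant_periodic J P (X i)"
  shows "invariant_periodic J P (\<Inter>i\<in>I. X i)"
  using assms(4,5,6)
proof (induction I rule: finite_ne_induct)
  case (insert i I)
  have Xi: "invariant_periodic J P (X i)" and XI: "invariant_periodic J P (\<Inter>i\<in>I. X i)"
    using insert by simp_all
  have "X i \<inter> (\<Inter>i\<in>I. X i) \<noteq> {}"
  proof
    assume "X i \<inter> (\<Inter>i\<in>I. X i) = {}"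
    with maps fixpts Xi XI have "\<exists>a. \<forall>j\<in>J. P j a = a"
      by (rule common_fixed_point_of_disjoint_invariant)
    with no_common show False ..
  qed
  with Xi XI show ?case by (simp add: invariant_periodic_Int)
qed simp

section \<open>Common fixed points of commuting circle maps\<close>

lemma lifted_fixed_set_invariant:
  assumes cont: "continuous_on circle \<Psi>" and into: "\<Psi> ` circle \<subseteq> circle"
    and fixed: "\<exists>z\<in>circle. \<Psi> z = z"
    and lifts: "\<And>j. j \<in> J \<Longrightarrow> lift_of (\<Phi> j) (P j)"
    and inj: "\<And>j. j \<in> J \<Longrightarrow> inj_on (\<Phi> j) circle"
    and comm: "\<And>j z. j \<in> J \<Longrightarrow> z \<in> circle \<Longrightarrow> \<Psi> (\<Phi> j z) = \<Phi> j (\<Psi> z)"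
  shows "invariant_periodic J P {t. \<Psi> (cis (2 * pi * t)) = cis (2 * pi * t)}"
    (is "invariant_periodic J P ?X")
proof -
  have "continuous_on UNIV (\<lambda>t. \<Psi> (cis (2 * pi * t)))"
    by (rule continuous_on_compose2[OF cont]) (auto intro!: continuous_intros simp: cis_in_circle)
  then have "closed ?X" by (intro closed_Collect_eq) (auto intro!: continuous_intros)
  moreover have "?X \<noteq> {}" using fixed circle_covered by fastforce
  moreover have "t + of_int k \<in> ?X" if "t \<in> ?X" for t k using that by (simp add: cis_shift_int)
  moreover have "P j t \<in> ?X \<longleftrightarrow> t \<in> ?X" if j: "j \<in> J" for j t
  proof -
    define w where "w = cis (2 * pi * t)"
    have w: "w \<in> circle" "\<Psi> w \<in> circle" using into by (auto simp: w_def cis_in_circle)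
    have "cis (2 * pi * P j t) = \<Phi> j w" using lifts[OF j] by (simp add: lift_of_def w_def)
    then have "P j t \<in> ?X \<longleftrightarrow> \<Phi> j (\<Psi> w) = \<Phi> j w" using comm[OF j w(1)] by simp
    also have "\<dots> \<longleftrightarrow> \<Psi> w = w" using inj_onD[OF inj[OF j] _ w(2,1)] by auto
    finally show ?thesis by (simp add: w_def)
  qed
  ultimately show ?thesis unfolding invariant_periodic_def by blast
qed

theorem commuting_maps_common_fixed_point:
  assumes homeo: "\<And>j. j \<in> J \<Longrightarrow> orient_pres_homeo (\<Phi> j)"
    and fixed: "\<And>j. j \<in> J \<Longrightarrow> \<exists>z\<in>circle. \<Phi> j z = z"
    and no_common: "\<not> (\<exists>z\<in>circle. \<forall>j\<in>J. \<Phi> j z = z)"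
    and I: "finite I" "I \<noteq> {}"
    and cont: "\<And>i. i \<in> I \<Longrightarrow> continuous_on circle (\<Psi> i)"
    and into: "\<And>i. i \<in> I \<Longrightarrow> \<Psi> i ` circle \<subseteq> circle"
    and fixed': "\<And>i. i \<in> I \<Longrightarrow> \<exists>z\<in>circle. \<Psi> i z = z"
    and comm: "\<And>i j z. i \<in> I \<Longrightarrow> j \<in> J \<Longrightarrow> z \<in> circle \<Longrightarrow> \<Psi> i (\<Phi> j z) = \<Phi> j (\<Psi> i z)"
  shows "\<exists>z\<in>circle. \<forall>i\<in>I. \<Psi> i z = z"
proof -
  have "\<forall>j\<in>J. \<exists>Q. lift_of (\<Phi> j) Q \<and> degree_one Q \<and> (\<exists>x. Q x = x)"
    using orient_pres_homeo_fixed_lift homeo fixed by blast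
  then obtain P where lift: "\<And>j. j \<in> J \<Longrightarrow> lift_of (\<Phi> j) (P j)"
    and deg: "\<And>j. j \<in> J \<Longrightarrow> degree_one (P j)" and fixP: "\<And>j. j \<in> J \<Longrightarrow> \<exists>x. P j x = x"
    by metis
  have inj: "inj_on (\<Phi> j) circle" if "j \<in> J" for j
    using homeo[OF that] unfolding orient_pres_homeo_def homeomorphism_def by (metis inj_on_def)
  have no_common_lift: "\<not> (\<exists>a. \<forall>j\<in>J. P j a = a)"
  proof
    assume "\<exists>a. \<forall>j\<in>J. P j a = a"
    then obtain a where "\<forall>j\<in>J. P j a = a" by blast
    then have "\<forall>j\<in>J. \<Phi> j (cis (2 * pi * a)) = cis (2 * pi * a)"
      using lift unfolding lift_of_def by simp
    then show False using no_common cis_in_circle by blast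
  qed
  define X where "X i = {t. \<Psi> i (cis (2 * pi * t)) = cis (2 * pi * t)}" for i
  have X_inv: "invariant_periodic J P (X i)" if "i \<in> I" for i
    unfolding X_def by (rule lifted_fixed_set_invariant[OF cont[OF that] into[OF that]
          fixed'[OF that] lift inj comm[OF that]])
  have "invariant_periodic J P (\<Inter>i\<in>I. X i)"
    by (rule invariant_periodic_Inter[OF deg fixP no_common_lift I X_inv])
  then have "(\<Inter>i\<in>I. X i) \<noteq> {}" by (simp add: invariant_periodic_def)
  then obtain b where "\<forall>i\<in>I. b \<in> X i" by blast
  then have "\<forall>i\<in>I. \<Psi> i (cis (2 * pi * b)) = cis (2 * pi * b)" by (simp add: X_def)
  then show ?thesis using cis_in_circle[of "2 * pi * b"] by blast
qed

lemma compose_map_fixed: "\<forall>i\<in>set is. \<Phi> i w = w \<Longrightarrow> compose (map \<Phi> is) w = w"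
  by (induction "is") (auto simp: compose_def)

theorem propositionE:
  fixes n m :: int
  assumes "n < 0" and "0 < m"
  shows "\<not> (\<exists>\<Phi> :: int \<Rightarrow> complex \<Rightarrow> complex.
            (\<forall>j. n \<le> j \<and> j \<le> m \<longrightarrow> orient_pres_homeo (\<Phi> j)) \<and>
            (\<forall>j j'. n \<le> j \<and> j < 0 \<and> 0 < j' \<and> j' \<le> m \<longrightarrow>
               (\<forall>z\<in>circle. \<Phi> j (\<Phi> j' z) = \<Phi> j' (\<Phi> j z))) \<and>
            (\<forall>j. n \<le> j \<and> j \<le> m \<longrightarrow> ((\<exists>z\<in>circle. \<Phi> j z = z) \<longleftrightarrow> j \<noteq> 0)) \<and>
            (\<forall>z\<in>circle. compose (map \<Phi> [1..m]) z = \<Phi> 0 z) \<and>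
            (\<forall>z\<in>circle. \<Phi> 0 z = compose (map \<Phi> (rev [n..-1])) z))"
proof (intro notI, elim exE conjE)
  fix \<Phi> :: "int \<Rightarrow> complex \<Rightarrow> complex"
  assume homeo: "\<forall>j. n \<le> j \<and> j \<le> m \<longrightarrow> orient_pres_homeo (\<Phi> j)"
    and comm: "\<forall>j j'. n \<le> j \<and> j < 0 \<and> 0 < j' \<and> j' \<le> m \<longrightarrow>
               (\<forall>z\<in>circle. \<Phi> j (\<Phi> j' z) = \<Phi> j' (\<Phi> j z))"
    and fixed: "\<forall>j. n \<le> j \<and> j \<le> m \<longrightarrow> ((\<exists>z\<in>circle. \<Phi> j z = z) \<longleftrightarrow> j \<noteq> 0)"
    and pos: "\<forall>z\<in>circle. compose (map \<Phi> [1..m]) z = \<Phi> 0 z"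
    and neg: "\<forall>z\<in>circle. \<Phi> 0 z = compose (map \<Phi> (rev [n..-1])) z"
  have no_fix0: "\<not> (\<exists>z\<in>circle. \<Phi> 0 z = z)" using fixed assms by auto
  text \<open>The positive maps have no common fixed point, since \<Phi> 0 is their composition.\<close>
  have no_common_pos: "\<not> (\<exists>z\<in>circle. \<forall>j\<in>{1..m}. \<Phi> j z = z)"
    using no_fix0 pos compose_map_fixed[of "[1..m]" \<Phi>] by force
  text \<open>Hence the negative maps, which commute with them, have a common fixed point.\<close>
  have pos_homeo: "orient_pres_homeo (\<Phi> j)" and pos_fixed: "\<exists>z\<in>circle. \<Phi> j z = z"
    if "j \<in> {1..m}" for j
    using homeo fixed assms that by auto
  have neg_homeo: "orient_pres_homeo (\<Phi> i)" and neg_fixed: "\<exists>z\<in>circle. \<Phi> i z = z"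
    if "i \<in> {n..-1}" for i
    using homeo fixed assms that by auto
  have neg_comm: "\<Phi> i (\<Phi> j z) = \<Phi> j (\<Phi> i z)"
    if "i \<in> {n..-1}" "j \<in> {1..m}" "z \<in> circle" for i j z
    using comm that by force
  have "\<exists>z\<in>circle. \<forall>i\<in>{n..-1}. \<Phi> i z = z"
  proof (rule commuting_maps_common_fixed_point[OF pos_homeo pos_fixed no_common_pos _ _ _ _
        neg_fixed neg_comm])
    fix i assume "i \<in> {n..-1}"
    then have "orient_pres_homeo (\<Phi> i)" by (rule neg_homeo)
    then show "continuous_on circle (\<Phi> i)" "\<Phi> i ` circle \<subseteq> circle"
      unfolding orient_pres_homeo_def homeomorphism_def by auto
  qed (use assms in simp_all)
  text \<open>Such a point is fixed by their composition \<Phi> 0, a contradiction.\<close>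
  then show False
    using no_fix0 neg compose_map_fixed[of "rev [n..-1]" \<Phi>] by force
qed

end
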